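(* Let $G$ be a topological group acting continuously by linear isometries on a Banach space $X$. Suppose that $X$ admits an equivalent strictly convex norm $|\cdot|$. Define $\|x\|':=\sup_{g\in G}|gx|$ for $x\in X$. If this supremum is attained for every $x\in X$, then $\|\cdot\|'$ is a $G$-invariant strictly convex norm on $X$.
   Context: A norm is strictly convex if for every $x\neq y$ with $\|x\|=\|y\|$ one has $\|\frac{x+y}{2}\|<\|x\|$; it is $G$-invariant if $\|gx\|'=\|x\|'$ for all $g\in G$, $x\in X$. *)

theory Defs
  imports "HOL-Analysis.Analysis"
begin

definition is_norm :: "('x::real_vector \<Rightarrow> real) \<Rightarrow> bool" where
  "is_norm N \<longleftrightarrow>
     (\<forall>x. 0 \<le> N x) \<and> (\<forall>x. N x = 0 \<longleftrightarrow> x = 0) \<and>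
     (\<forall>a x. N (a *\<^sub>R x) = \<bar>a\<bar> * N x) \<and>
     (\<forall>x y. N (x + y) \<le> N x + N y)"

definition equivalent_norm :: "('x::real_normed_vector \<Rightarrow> real) \<Rightarrow> bool" where
  "equivalent_norm N \<longleftrightarrow> is_norm N \<and>
     (\<exists>c C. 0 < c \<and> 0 < C \<and> (\<forall>x. c * norm x \<le> N x \<and> N x \<le> C * norm x))"

definition strictly_convex_norm :: "('x::real_vector \<Rightarrow> real) \<Rightarrow> bool" where
  "strictly_convex_norm N \<longleftrightarrow>
     (\<forall>x y. x \<noteq> y \<and> N x = N y \<longrightarrow> N ((1/2) *\<^sub>R (x + y)) < N x)"

definition continuous_isometric_action ::
    "('g::topological_group_add \<Rightarrow> 'x::real_normed_vector \<Rightarrow> 'x) \<Rightarrow> bool" where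
  "continuous_isometric_action act \<longleftrightarrow>
     (\<forall>x. act 0 x = x) \<and>
     (\<forall>g h x. act (g + h) x = act g (act h x)) \<and>
     (\<forall>g. linear (act g)) \<and>
     (\<forall>g x. norm (act g x) = norm x) \<and>
     continuous_on UNIV (\<lambda>p. act (fst p) (snd p))"

definition G_invariant :: "('g \<Rightarrow> 'x \<Rightarrow> 'x) \<Rightarrow> ('x \<Rightarrow> real) \<Rightarrow> bool" where
  "G_invariant act N \<longleftrightarrow> (\<forall>g x. N (act g x) = N x)"

end

theory Submission
  imports Defs
begin

text \<open>
  Every map \<open>g\<close> is linear, so each \<open>x \<mapsto> |gx|\<close> is a seminorm and their pointwise supremum
  is again a seminorm; it dominates \<open>|\<cdot>|\<close> (take \<open>g = 0\<close>), hence is a norm, and it is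
  \<open>G\<close>-invariant because \<open>g \<mapsto> gh\<close> permutes \<open>G\<close>. For strict convexity let \<open>x \<noteq> y\<close> with
  \<open>\<parallel>x\<parallel>' = \<parallel>y\<parallel>'\<close> and pick \<open>g\<close> attaining \<open>\<parallel>(x + y)/2\<parallel>'\<close>. If \<open>|gx| = |gy|\<close>, strict convexity of
  \<open>|\<cdot>|\<close> at \<open>gx \<noteq> gy\<close> gives \<open>\<parallel>(x + y)/2\<parallel>' < |gx| \<le> \<parallel>x\<parallel>'\<close>; otherwise the triangle inequality
  gives \<open>\<parallel>(x + y)/2\<parallel>' \<le> (|gx| + |gy|)/2 < \<parallel>x\<parallel>'\<close>, since one of \<open>|gx|, |gy|\<close> is strictly below
  \<open>\<parallel>x\<parallel>' = \<parallel>y\<parallel>'\<close>. Attainment is what makes this pointwise argument survive the supremum.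
\<close>

definition orbit_sup :: "('g \<Rightarrow> 'x \<Rightarrow> 'x) \<Rightarrow> ('x \<Rightarrow> real) \<Rightarrow> 'x \<Rightarrow> real" where
  "orbit_sup T N x = (SUP g. N (T g x))"

lemma orbit_sup_upper:
  assumes "bdd_above (range (\<lambda>g. N (T g x)))"
  shows "N (T g x) \<le> orbit_sup T N x"
  unfolding orbit_sup_def by (rule cSUP_upper[OF _ assms]) simp

lemma orbit_sup_least:
  assumes "\<And>g. N (T g x) \<le> B"
  shows "orbit_sup T N x \<le> B"
  unfolding orbit_sup_def by (rule cSUP_least) (auto intro: assms)

lemma bdd_above_orbit_of_isometries:
  fixes T :: "'g \<Rightarrow> 'x::real_normed_vector \<Rightarrow> 'x"
  assumes "\<And>x. N x \<le> C * norm x" and "\<And>g x. norm (T g x) = norm x"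
  shows "bdd_above (range (\<lambda>g. N (T g x)))"
proof (rule bdd_aboveI[where M = "C * norm x"])
  fix y assume "y \<in> range (\<lambda>g. N (T g x))"
  then obtain g where "y = N (T g x)" by blast
  then show "y \<le> C * norm x" using assms(1)[of "T g x"] assms(2) by simp
qed

lemma orbit_sup_G_invariant:
  fixes act :: "'g::group_add \<Rightarrow> 'x \<Rightarrow> 'x"
  assumes compose: "\<And>g h x. act (g + h) x = act g (act h x)"
  shows "G_invariant act (orbit_sup act N)"
  unfolding G_invariant_def
proof (intro allI)
  fix h x
  have "range (\<lambda>g. N (act g (act h x))) = (\<lambda>g. N (act g x)) ` range (\<lambda>g. g + h)"
    by (simp only: image_image compose)
  also have "\<dots> = range (\<lambda>g. N (act g x))"
    by simp
  finally have "range (\<lambda>g. N (act g (act h x))) = range (\<lambda>g. N (act g x))" .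
  then show "orbit_sup act N (act h x) = orbit_sup act N x"
    unfolding orbit_sup_def by simp
qed

lemma inj_group_action:
  fixes act :: "'g::group_add \<Rightarrow> 'x \<Rightarrow> 'x"
  assumes "\<And>x. act 0 x = x" and "\<And>g h x. act (g + h) x = act g (act h x)"
  shows "inj (act g)"
  by (metis assms add.left_inverse injI)

lemma is_norm_orbit_sup:
  fixes T :: "'g \<Rightarrow> 'x::real_vector \<Rightarrow> 'x"
  assumes N: "is_norm N"
    and lin: "\<And>g. linear (T g)"
    and identity: "\<And>x. T e x = x"
    and bdd: "\<And>x. bdd_above (range (\<lambda>g. N (T g x)))"
  shows "is_norm (orbit_sup T N)"
proof -
  let ?M = "orbit_sup T N"
  have N0: "\<And>x. 0 \<le> N x" and Nz: "\<And>x. N x = 0 \<longleftrightarrow> x = 0"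
    and Nscale: "\<And>a x. N (a *\<^sub>R x) = \<bar>a\<bar> * N x" and Ntri: "\<And>x y. N (x + y) \<le> N x + N y"
    using N unfolding is_norm_def by auto
  have upper: "N (T g x) \<le> ?M x" for g x
    by (rule orbit_sup_upper[of N T, OF bdd])
  have dominates: "N x \<le> ?M x" for x
    using upper[of e x] identity by simp
  have scale_le: "?M (a *\<^sub>R x) \<le> \<bar>a\<bar> * ?M x" for a x
    by (rule orbit_sup_least) (simp add: linear_scale[OF lin] Nscale upper mult_left_mono)
  have M0: "?M 0 = 0"
    using scale_le[of 0 0] dominates[of 0] N0[of 0] by simp
  have "?M (a *\<^sub>R x) = \<bar>a\<bar> * ?M x" for a x
  proof (cases "a = 0")
    case False
    have "?M x \<le> \<bar>1 / a\<bar> * ?M (a *\<^sub>R x)"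
      using scale_le[of "1 / a" "a *\<^sub>R x"] False by simp
    then have "\<bar>a\<bar> * ?M x \<le> ?M (a *\<^sub>R x)"
      using False by (simp add: field_simps)
    then show ?thesis using scale_le[of a x] by linarith
  qed (simp add: M0)
  moreover have "?M (x + y) \<le> ?M x + ?M y" for x y
  proof (rule orbit_sup_least)
    fix g
    have "N (T g (x + y)) \<le> N (T g x) + N (T g y)"
      by (simp add: linear_add[OF lin] Ntri)
    also have "\<dots> \<le> ?M x + ?M y" using upper[of g x] upper[of g y] by linarith
    finally show "N (T g (x + y)) \<le> ?M x + ?M y" .
  qed
  moreover have "?M x = 0 \<longleftrightarrow> x = 0" for x
    using dominates[of x] N0[of x] Nz[of x] M0 by (metis antisym)
  moreover have "0 \<le> ?M x" for x
    using dominates[of x] N0[of x] by linarith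
  ultimately show ?thesis unfolding is_norm_def by blast
qed

lemma strictly_convex_orbit_sup:
  fixes T :: "'g \<Rightarrow> 'x::real_vector \<Rightarrow> 'x"
  assumes N: "is_norm N" and convex: "strictly_convex_norm N"
    and lin: "\<And>g. linear (T g)" and inj: "\<And>g. inj (T g)"
    and bdd: "\<And>x. bdd_above (range (\<lambda>g. N (T g x)))"
    and attained: "\<And>x. \<exists>g. N (T g x) = orbit_sup T N x"
  shows "strictly_convex_norm (orbit_sup T N)"
  unfolding strictly_convex_norm_def
proof (intro allI impI)
  let ?M = "orbit_sup T N"
  fix x y assume xy: "x \<noteq> y \<and> ?M x = ?M y"
  let ?m = "(1/2) *\<^sub>R (x + y)"
  obtain g where g: "N (T g ?m) = ?M ?m" using attained by blast
  define u v where "u = T g x" and "v = T g y"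
  have image_mid: "T g ?m = (1/2) *\<^sub>R (u + v)"
    unfolding u_def v_def by (simp add: linear_scale[OF lin] linear_add[OF lin])
  have "u \<noteq> v" using xy inj unfolding u_def v_def by (meson injD)
  have u_le: "N u \<le> ?M x" and v_le: "N v \<le> ?M x"
    using orbit_sup_upper[of N T, OF bdd] xy unfolding u_def v_def by metis+
  have "N ((1/2) *\<^sub>R (u + v)) < ?M x"
  proof (cases "N u = N v")
    case True
    then have "N ((1/2) *\<^sub>R (u + v)) < N u"
      using convex \<open>u \<noteq> v\<close> unfolding strictly_convex_norm_def by blast
    then show ?thesis using u_le by linarith
  next
    case False
    have "N ((1/2) *\<^sub>R (u + v)) \<le> (1/2) * (N u + N v)"
    proof -
      have "N ((1/2) *\<^sub>R (u + v)) = (1/2) * N (u + v)"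
        using N unfolding is_norm_def by simp
      also have "\<dots> \<le> (1/2) * (N u + N v)"
        using N unfolding is_norm_def by simp
      finally show ?thesis .
    qed
    then show ?thesis using False u_le v_le by (cases "N u < N v") auto
  qed
  then show "?M ?m < ?M x" using g image_mid by simp
qed

theorem proposition4p3:
  fixes act :: "'g::topological_group_add \<Rightarrow> 'x::banach \<Rightarrow> 'x"
    and N :: "'x \<Rightarrow> real"
  assumes "continuous_isometric_action act"
    and "equivalent_norm N"
    and "strictly_convex_norm N"
    and "\<forall>x. \<exists>g. N (act g x) = (SUP h. N (act h x))"
  shows "is_norm (\<lambda>x. SUP g. N (act g x))
       \<and> G_invariant act (\<lambda>x. SUP g. N (act g x))
       \<and> strictly_convex_norm (\<lambda>x. SUP g. N (act g x))"
proof -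
  have identity: "\<And>x. act 0 x = x" and compose: "\<And>g h x. act (g + h) x = act g (act h x)"
    and lin: "\<And>g. linear (act g)" and isometric: "\<And>g x. norm (act g x) = norm x"
    using assms(1) unfolding continuous_isometric_action_def by auto
  obtain C where N: "is_norm N" and bounded: "\<And>x. N x \<le> C * norm x"
    using assms(2) unfolding equivalent_norm_def by blast
  have bdd: "\<And>x. bdd_above (range (\<lambda>g. N (act g x)))"
    using bdd_above_orbit_of_isometries[OF bounded isometric] .
  have attained: "\<And>x. \<exists>g. N (act g x) = orbit_sup act N x"
    using assms(4) unfolding orbit_sup_def by blast
  have "is_norm (orbit_sup act N)"
    by (rule is_norm_orbit_sup[of N act, OF N lin identity bdd])
  moreover have "G_invariant act (orbit_sup act N)"
    by (rule orbit_sup_G_invariant[of act, OF compose])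
  moreover have "strictly_convex_norm (orbit_sup act N)"
    using inj_group_action[of act, OF identity compose]
    by (rule strictly_convex_orbit_sup[of N act, OF N assms(3) lin _ bdd attained])
  moreover have "(\<lambda>x. SUP g. N (act g x)) = orbit_sup act N"
    unfolding orbit_sup_def ..
  ultimately show ?thesis by simp
qed

end
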